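(* Let $K$ be a field, $\nu$ a valuation on $K[x]$, and $\mathbf{Q}\subseteq K[x]$ a set of monic nonconstant polynomials such that: (1) $\nu_Q$ is a valuation on $K[x]$ for every $Q\in\mathbf{Q}$; (2) for every finite nonempty subset $\mathcal F\subseteq\mathbf{Q}$ there exists $Q'\in\mathcal F$ with $\nu_{Q'}(Q)=\nu(Q)$ for every $Q\in\mathcal F$; (3) $\mathbf{Q}$ satisfies (GS1$^*$). Then $\mathbf{Q}$ is a complete set for $\nu$.
   Context: $\nu:K[x]\to\Gamma\cup\{\infty\}$ is a valuation ($\Gamma$ an ordered abelian group) with $\nu(f)=\infty$ only for $f=0$. For monic nonconstant $Q$, the $Q$-expansion of $f$ is the unique expression $f=f_0+f_1Q+\dots+f_nQ^n$ with each $f_i=0$ or $\deg f_i<\deg Q$, and $\nu_Q(f)=\min_i\nu(f_iQ^i)$. A set $\mathbf{Q}$ of monic nonconstant polynomials is complete for $\nu$ if for every nonconstant $f\in K[x]$ there is $Q\in\mathbf{Q}$ with $\deg Q\le\deg f$ and $\nu_Q(f)=\nu(f)$. For finitely supported $\lambda:\mathbf{Q}\to\mathbb{N}_0$ let $\mathbf{Q}^\lambda=\prod_{\lambda(Q)\neq0}Q^{\lambda(Q)}$. (GS1$^*$): for every $f\in K[x]$ there exist $r\ge0$, $a_1,\dots,a_r\in K$ and finitely supported $\lambda_1,\dots,\lambda_r:\mathbf{Q}\to\mathbb{N}_0$ with $f=\sum_{i=1}^ra_i\mathbf{Q}^{\lambda_i}$, $\nu(a_i\mathbf{Q}^{\lambda_i})\ge\nu(f)$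 for all $i$, and $\deg Q\le\deg f$ whenever $\lambda_i(Q)\ne0$ for some $i$. *)

theory Defs
  imports "HOL-Computational_Algebra.Polynomial"
begin

(* A valuation nu : K[x] -> Gamma \<union> {\<infinity>} with nu f = \<infinity> iff f = 0 is represented by
   its restriction v : K[x] -> Gamma to nonzero polynomials; the value v 0 is irrelevant
   and stands for \<infinity>. *)
definition valuation :: "('a::field poly \<Rightarrow> 'g::linordered_ab_group_add) \<Rightarrow> bool" where
  "valuation v \<longleftrightarrow>
     (\<forall>f g. f \<noteq> 0 \<longrightarrow> g \<noteq> 0 \<longrightarrow> v (f * g) = v f + v g) \<and>
     (\<forall>f g. f \<noteq> 0 \<longrightarrow> g \<noteq> 0 \<longrightarrow> f + g \<noteq> 0 \<longrightarrow> min (v f) (v g) \<le> v (f + g))"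

definition monic_nonconst :: "'a::field poly \<Rightarrow> bool" where
  "monic_nonconst Q \<longleftrightarrow> lead_coeff Q = 1 \<and> degree Q > 0"

definition qexp :: "'a::field poly \<Rightarrow> 'a poly \<Rightarrow> nat \<Rightarrow> 'a poly" where
  "qexp Q f = (THE c. finite {i. c i \<noteq> 0} \<and>
                      (\<forall>i. c i = 0 \<or> degree (c i) < degree Q) \<and>
                      f = (\<Sum>i\<in>{i. c i \<noteq> 0}. c i * Q ^ i))"

definition nuQ :: "('a::field poly \<Rightarrow> 'g::linordered_ab_group_add) \<Rightarrow> 'a poly \<Rightarrow> 'a poly \<Rightarrow> 'g" where
  "nuQ v Q f = Min {v (qexp Q f i * Q ^ i) | i. qexp Q f i \<noteq> 0}"

definition complete_set :: "('a::field poly \<Rightarrow> 'g::linordered_ab_group_add) \<Rightarrow> 'a poly set \<Rightarrow> bool" where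
  "complete_set v Qs \<longleftrightarrow>
     (\<forall>f. degree f > 0 \<longrightarrow> (\<exists>Q\<in>Qs. degree Q \<le> degree f \<and> nuQ v Q f = v f))"

definition Qpow :: "('a::field poly \<Rightarrow> nat) \<Rightarrow> 'a poly" where
  "Qpow lam = (\<Prod>Q\<in>{Q. lam Q \<noteq> 0}. Q ^ lam Q)"

(* GS1-star; nu(a_i Q^lambda_i) \<ge> nu(f) with the convention nu(0) = \<infinity> *)
definition GS1_star :: "('a::field poly \<Rightarrow> 'g::linordered_ab_group_add) \<Rightarrow> 'a poly set \<Rightarrow> bool" where
  "GS1_star v Qs \<longleftrightarrow>
     (\<forall>f. \<exists>(r::nat) (a::nat \<Rightarrow> 'a) (lam::nat \<Rightarrow> 'a poly \<Rightarrow> nat).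
        (\<forall>i<r. finite {Q. lam i Q \<noteq> 0} \<and> {Q. lam i Q \<noteq> 0} \<subseteq> Qs) \<and>
        f = (\<Sum>i<r. smult (a i) (Qpow (lam i))) \<and>
        (\<forall>i<r. smult (a i) (Qpow (lam i)) \<noteq> 0 \<longrightarrow>
                 f \<noteq> 0 \<and> v (smult (a i) (Qpow (lam i))) \<ge> v f) \<and>
        (\<forall>i<r. \<forall>Q. lam i Q \<noteq> 0 \<longrightarrow> degree Q \<le> degree f))"

end

theory Submission
  imports Defs
begin

text \<open>
  Given a nonconstant f, (GS1*) writes it as a sum of monomials a_i Q^lambda_i in finitely
  many Q of degree at most deg f, each of value at least nu(f). Hypothesis (2) yields one Q'
  among them with nu_Q' = nu on all of them; as both are valuations and nu_Q' agrees with nu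
  on constants, they agree on every monomial, so the ultrametric inequality for nu_Q' gives
  nu_Q'(f) \<ge> nu(f). The reverse inequality nu_Q(f) \<le> nu(f) holds for every Q, by the
  ultrametric inequality for nu applied to the Q-expansion of f.
\<close>

definition is_qexp :: "'a::field poly \<Rightarrow> 'a poly \<Rightarrow> (nat \<Rightarrow> 'a poly) \<Rightarrow> bool" where
  "is_qexp Q f c \<longleftrightarrow> finite {i. c i \<noteq> 0} \<and>
     (\<forall>i. c i = 0 \<or> degree (c i) < degree Q) \<and>
     f = (\<Sum>i\<in>{i. c i \<noteq> 0}. c i * Q ^ i)"

lemma qexp_altdef: "qexp Q f = (THE c. is_qexp Q f c)"
  unfolding qexp_def is_qexp_def ..

lemma sum_support_shift:
  fixes c :: "nat \<Rightarrow> 'a::comm_semiring_1"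
  assumes "finite {i. c i \<noteq> 0}"
  shows "(\<Sum>i\<in>{i. c i \<noteq> 0}. c i * q ^ i) =
         c 0 + q * (\<Sum>i\<in>{i. c (Suc i) \<noteq> 0}. c (Suc i) * q ^ i)"
proof -
  obtain N where "{i. c i \<noteq> 0} \<subseteq> {..<N}"
    using assms finite_nat_iff_bounded by blast
  then have N: "{i. c i \<noteq> 0} \<subseteq> {..<Suc N}" by auto
  have shifted: "{i. c (Suc i) \<noteq> 0} \<subseteq> {..<N}"
    using N by auto
  have "(\<Sum>i\<in>{i. c i \<noteq> 0}. c i * q ^ i) = (\<Sum>i<Suc N. c i * q ^ i)"
    by (rule sum.mono_neutral_left) (use N in auto)
  also have "\<dots> = c 0 + q * (\<Sum>i<N. c (Suc i) * q ^ i)"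
    unfolding sum.lessThan_Suc_shift by (simp add: sum_distrib_left mult_ac)
  also have "(\<Sum>i<N. c (Suc i) * q ^ i) = (\<Sum>i\<in>{i. c (Suc i) \<noteq> 0}. c (Suc i) * q ^ i)"
    by (rule sum.mono_neutral_right) (use shifted in auto)
  finally show ?thesis .
qed

lemma is_qexp_iff_div_mod:
  assumes "degree Q > 0"
  shows "is_qexp Q f c \<longleftrightarrow> c 0 = f mod Q \<and> is_qexp Q (f div Q) (\<lambda>i. c (Suc i))"
proof -
  have Q: "Q \<noteq> 0" using assms by auto
  have supp: "finite {i. c i \<noteq> 0} \<longleftrightarrow> finite {i. c (Suc i) \<noteq> 0}"
  proof -
    have "{i. c i \<noteq> 0} \<subseteq> insert 0 (Suc ` {i. c (Suc i) \<noteq> 0})"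
      using not0_implies_Suc by (fastforce simp: image_iff)
    moreover have "{i. c (Suc i) \<noteq> 0} = Suc -` {i. c i \<noteq> 0}" by auto
    ultimately show ?thesis
      by (metis finite_imageI finite_insert finite_subset finite_vimageI inj_Suc)
  qed
  have deg: "(\<forall>i. c i = 0 \<or> degree (c i) < degree Q) \<longleftrightarrow>
      (c 0 = 0 \<or> degree (c 0) < degree Q) \<and> (\<forall>i. c (Suc i) = 0 \<or> degree (c (Suc i)) < degree Q)"
    by (metis not0_implies_Suc)
  show ?thesis
  proof
    assume c: "is_qexp Q f c"
    define g where "g = (\<Sum>i\<in>{i. c (Suc i) \<noteq> 0}. c (Suc i) * Q ^ i)"
    have f: "f = c 0 + Q * g"
      using c sum_support_shift unfolding is_qexp_def g_def by blast
    have c0: "degree (c 0) < degree Q"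
      using c assms unfolding is_qexp_def by (metis degree_0)
    have "f div Q = g" "f mod Q = c 0"
      using f Q c0 by (simp_all add: div_poly_less mod_poly_less)
    then show "c 0 = f mod Q \<and> is_qexp Q (f div Q) (\<lambda>i. c (Suc i))"
      using c supp deg unfolding is_qexp_def g_def by simp
  next
    assume c: "c 0 = f mod Q \<and> is_qexp Q (f div Q) (\<lambda>i. c (Suc i))"
    have "f = f mod Q + Q * (f div Q)" by simp
    also have "\<dots> = c 0 + Q * (\<Sum>i\<in>{i. c (Suc i) \<noteq> 0}. c (Suc i) * Q ^ i)"
      using c unfolding is_qexp_def by simp
    also have "\<dots> = (\<Sum>i\<in>{i. c i \<noteq> 0}. c i * Q ^ i)"
      using c supp unfolding is_qexp_def by (simp add: sum_support_shift)
    finally have "f = (\<Sum>i\<in>{i. c i \<noteq> 0}. c i * Q ^ i)" .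
    moreover have "c 0 = 0 \<or> degree (c 0) < degree Q"
      using c degree_mod_less[OF Q] by simp
    ultimately show "is_qexp Q f c"
      using c supp deg unfolding is_qexp_def by blast
  qed
qed

lemma is_qexp_coeff:
  assumes "degree Q > 0" and "is_qexp Q f c"
  shows "c i = f div Q ^ i mod Q"
  using assms(2)
proof (induction i arbitrary: f c)
  case 0
  then show ?case using is_qexp_iff_div_mod[OF assms(1), THEN iffD1] by simp
next
  case (Suc i)
  have "is_qexp Q (f div Q) (\<lambda>j. c (Suc j))"
    using is_qexp_iff_div_mod[OF assms(1), THEN iffD1, OF Suc.prems] ..
  from Suc.IH[OF this] show ?case by (simp add: poly_div_mult_right)
qed

lemma is_qexp_exists:
  assumes "degree Q > 0"
  shows "\<exists>c. is_qexp Q f c"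
proof (induction "degree f" arbitrary: f rule: less_induct)
  case less
  have "\<exists>d. is_qexp Q (f div Q) d"
  proof (cases "f div Q = 0")
    case True
    have "is_qexp Q 0 (\<lambda>_. 0)" unfolding is_qexp_def by simp
    then show ?thesis using True by auto
  next
    case False
    then have "degree (f div Q) < degree f"
      using assms by (intro degree_div_less) (auto simp: div_poly_eq_0_iff)
    then show ?thesis by (rule less)
  qed
  then obtain d where "is_qexp Q (f div Q) d" ..
  then have "is_qexp Q f (case_nat (f mod Q) d)"
    by (intro is_qexp_iff_div_mod[OF assms, THEN iffD2]) simp
  then show ?case by blast
qed

lemma qexp_eqI:
  assumes "degree Q > 0" and c: "is_qexp Q f c"
  shows "qexp Q f = c"
  unfolding qexp_altdef
proof (rule the_equality)
  fix d assume "is_qexp Q f d"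
  then show "d = c" using c by (simp add: is_qexp_coeff[OF assms(1)] fun_eq_iff)
qed (rule c)

lemma is_qexp_qexp:
  assumes "degree Q > 0"
  shows "is_qexp Q f (qexp Q f)"
  using is_qexp_exists[OF assms] qexp_eqI[OF assms] by metis

lemma qexp_const:
  assumes "degree Q > 0"
  shows "qexp Q [:a:] i = (if i = 0 then [:a:] else 0)"
proof -
  obtain c where c: "is_qexp Q [:a:] c" using is_qexp_exists[OF assms] ..
  have "Q \<noteq> 0" using assms by auto
  then have "degree [:a:] < degree (Q ^ i)" if "i > 0"
    using assms that by (simp add: degree_power_eq)
  then show ?thesis
    using assms is_qexp_coeff[OF assms c, of i] qexp_eqI[OF assms c]
    by (auto simp: div_poly_less mod_poly_less)
qed

lemma nuQ_const:
  assumes "degree Q > 0" and "a \<noteq> 0"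
  shows "nuQ v Q [:a:] = v [:a:]"
proof -
  have "{v (qexp Q [:a:] i * Q ^ i) | i. qexp Q [:a:] i \<noteq> 0} = {v [:a:]}"
    using assms by (auto simp: qexp_const)
  then show ?thesis unfolding nuQ_def by simp
qed

lemma valuation_mult:
  assumes "valuation v" and "f \<noteq> 0" and "g \<noteq> 0"
  shows "v (f * g) = v f + v g"
  using assms unfolding valuation_def by blast

lemma valuation_one:
  assumes "valuation v"
  shows "v 1 = 0"
proof -
  have "v (1 * 1) = v 1 + v 1"
    using assms unfolding valuation_def by (metis one_neq_zero)
  then show ?thesis by simp
qed

lemma valuation_add_ge:
  assumes "valuation v" and "f \<noteq> 0" and "g \<noteq> 0" and "f + g \<noteq> 0"
  shows "min (v f) (v g) \<le> v (f + g)"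
  using assms unfolding valuation_def by blast

lemma valuation_sum_ge:
  assumes v: "valuation v" and "finite S"
    and "\<And>i. i \<in> S \<Longrightarrow> t i \<noteq> 0 \<Longrightarrow> m \<le> v (t i)"
    and "sum t S \<noteq> 0"
  shows "m \<le> v (sum t S)"
  using assms(2-)
proof (induction S rule: finite_induct)
  case (insert x S)
  have sum: "sum t (insert x S) = t x + sum t S" using insert.hyps by simp
  consider "t x = 0" | "sum t S = 0" | "t x \<noteq> 0" "sum t S \<noteq> 0" by blast
  then show ?case
  proof cases
    case 1
    then show ?thesis using insert.IH insert.prems unfolding sum by simp
  next
    case 2
    then show ?thesis using insert.prems unfolding sum by simp
  next
    case 3
    then have "m \<le> min (v (t x)) (v (sum t S))"
      using insert.IH insert.prems(1) by simp
    also have "\<dots> \<le> v (t x + sum t S)"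
      using valuation_add_ge[OF v 3] insert.prems(2) unfolding sum by simp
    finally show ?thesis unfolding sum .
  qed
qed simp

lemma nuQ_le:
  assumes "degree Q > 0" and "valuation v" and "f \<noteq> 0"
  shows "nuQ v Q f \<le> v f"
proof -
  define c where "c = qexp Q f"
  let ?A = "{v (c i * Q ^ i) | i. c i \<noteq> 0}"
  have S: "finite {i. c i \<noteq> 0}" and f: "f = (\<Sum>i\<in>{i. c i \<noteq> 0}. c i * Q ^ i)"
    using is_qexp_qexp[OF assms(1), of f] unfolding is_qexp_def c_def by blast+
  have "finite ?A" using S by (simp add: setcompr_eq_image)
  have "Min ?A \<le> v (\<Sum>i\<in>{i. c i \<noteq> 0}. c i * Q ^ i)"
  proof (rule valuation_sum_ge[OF assms(2) S])
    fix i assume "i \<in> {i. c i \<noteq> 0}"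
    then show "Min ?A \<le> v (c i * Q ^ i)"
      using \<open>finite ?A\<close> by (intro Min_le) blast+
  qed (use f assms(3) in simp)
  then show ?thesis unfolding nuQ_def c_def[symmetric] using f by simp
qed

lemma valuations_agree_prod:
  assumes v: "valuation v" and w: "valuation w" and "finite S"
    and "\<And>x. x \<in> S \<Longrightarrow> g x \<noteq> 0 \<and> w (g x) = v (g x)"
  shows "w (prod g S) = v (prod g S)"
  using assms(3,4)
proof (induction S rule: finite_induct)
  case empty
  show ?case using valuation_one[OF v] valuation_one[OF w] by simp
next
  case (insert x S)
  have "prod g S \<noteq> 0" using insert by simp
  then show ?case
    using insert v w unfolding valuation_def by simp
qed

lemma valuations_agree_power:
  assumes "valuation v" and "valuation w" and "x \<noteq> 0" and "w x = v x"
  shows "w (x ^ n) = v (x ^ n)"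
  using valuations_agree_prod[OF assms(1,2), of "{..<n}" "\<lambda>_. x"] assms(3,4) by simp

lemma valuations_agree_monomial:
  assumes v: "valuation v" and w: "valuation w"
    and "a \<noteq> 0" and "w [:a:] = v [:a:]" and fin: "finite {Q. lam Q \<noteq> 0}"
    and agree: "\<And>Q. lam Q \<noteq> 0 \<Longrightarrow> Q \<noteq> 0 \<and> w Q = v Q"
  shows "w (smult a (Qpow lam)) = v (smult a (Qpow lam))"
proof -
  have "Qpow lam \<noteq> 0"
    unfolding Qpow_def using fin agree by auto
  moreover have "w (Qpow lam) = v (Qpow lam)"
    unfolding Qpow_def using agree
    by (intro valuations_agree_prod[OF v w fin]) (simp add: valuations_agree_power[OF v w])
  moreover have "[:a:] \<noteq> 0" using \<open>a \<noteq> 0\<close> by simp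
  ultimately show ?thesis
    using assms(4) valuation_mult[OF v, of "[:a:]"] valuation_mult[OF w, of "[:a:]"] by simp
qed

lemma valuation_ge_of_monomial_sum:
  fixes r :: nat
  assumes v: "valuation v" and w: "valuation w"
    and constants: "\<And>c. c \<noteq> 0 \<Longrightarrow> w [:c:] = v [:c:]"
    and fin: "\<And>i. i < r \<Longrightarrow> finite {Q. lam i Q \<noteq> 0}"
    and agree: "\<And>i Q. i < r \<Longrightarrow> lam i Q \<noteq> 0 \<Longrightarrow> Q \<noteq> 0 \<and> w Q = v Q"
    and terms: "\<And>i. i < r \<Longrightarrow> smult (a i) (Qpow (lam i)) \<noteq> 0 \<Longrightarrow>
                  m \<le> v (smult (a i) (Qpow (lam i)))"
    and "(\<Sum>i<r. smult (a i) (Qpow (lam i))) \<noteq> 0"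
  shows "m \<le> w (\<Sum>i<r. smult (a i) (Qpow (lam i)))"
proof (rule valuation_sum_ge[OF w])
  fix i assume i: "i \<in> {..<r}" and nz: "smult (a i) (Qpow (lam i)) \<noteq> 0"
  then have "a i \<noteq> 0" by auto
  with i have "w (smult (a i) (Qpow (lam i))) = v (smult (a i) (Qpow (lam i)))"
    by (intro valuations_agree_monomial[OF v w] constants fin agree) auto
  then show "m \<le> w (smult (a i) (Qpow (lam i)))" using terms i nz by simp
qed (use assms(7) in simp_all)

theorem proposition5p3:
  fixes v :: "'a::field poly \<Rightarrow> 'g::linordered_ab_group_add"
    and Qs :: "'a poly set"
  assumes "valuation v"
    and "\<forall>Q\<in>Qs. monic_nonconst Q"
    and "\<forall>Q\<in>Qs. valuation (nuQ v Q)"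
    and "\<forall>F. finite F \<longrightarrow> F \<noteq> {} \<longrightarrow> F \<subseteq> Qs \<longrightarrow>
           (\<exists>Q'\<in>F. \<forall>Q\<in>F. nuQ v Q' Q = v Q)"
    and "GS1_star v Qs"
  shows "complete_set v Qs"
  unfolding complete_set_def
proof (intro allI impI)
  fix f :: "'a poly"
  assume deg_f: "degree f > 0"
  then have "f \<noteq> 0" by auto
  obtain r :: nat and a lam where supp: "\<forall>i<r. finite {Q. lam i Q \<noteq> 0} \<and> {Q. lam i Q \<noteq> 0} \<subseteq> Qs"
    and f: "f = (\<Sum>i<r. smult (a i) (Qpow (lam i)))"
    and terms: "\<forall>i<r. smult (a i) (Qpow (lam i)) \<noteq> 0 \<longrightarrow>
                  f \<noteq> 0 \<and> v f \<le> v (smult (a i) (Qpow (lam i)))"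
    and degs: "\<forall>i<r. \<forall>Q. lam i Q \<noteq> 0 \<longrightarrow> degree Q \<le> degree f"
    using assms(5)[unfolded GS1_star_def, rule_format, of f] by blast
  define F where "F = (\<Union>i<r. {Q. lam i Q \<noteq> 0})"
  have "F \<noteq> {}"
  proof
    assume "F = {}"
    then have "degree f \<le> 0"
      unfolding f by (intro degree_sum_le) (auto simp: F_def Qpow_def)
    with deg_f show False by simp
  qed
  moreover have "finite F" "F \<subseteq> Qs" using supp by (auto simp: F_def)
  ultimately obtain Q' where "Q' \<in> F" and agree: "\<forall>Q\<in>F. nuQ v Q' Q = v Q"
    using assms(4) by blast
  then have Q': "Q' \<in> Qs" "degree Q' > 0" "degree Q' \<le> degree f"
    using \<open>F \<subseteq> Qs\<close> assms(2) degs by (auto simp: F_def monic_nonconst_def)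
  have "v f \<le> nuQ v Q' f"
    unfolding f
  proof (rule valuation_ge_of_monomial_sum[OF assms(1)])
    show "valuation (nuQ v Q')" using assms(3) Q'(1) by blast
    show "nuQ v Q' [:c:] = v [:c:]" if "c \<noteq> 0" for c by (rule nuQ_const[OF Q'(2) that])
    fix i Q assume "i < r" "lam i Q \<noteq> 0"
    then have "Q \<in> F" by (auto simp: F_def)
    then show "Q \<noteq> 0 \<and> nuQ v Q' Q = v Q"
      using agree \<open>F \<subseteq> Qs\<close> assms(2) by (fastforce simp: monic_nonconst_def)
  qed (use supp terms f \<open>f \<noteq> 0\<close> in auto)
  then have "nuQ v Q' f = v f" using nuQ_le[OF Q'(2) assms(1) \<open>f \<noteq> 0\<close>] by simp
  then show "\<exists>Q\<in>Qs. degree Q \<le> degree f \<and> nuQ v Q f = v f" using Q' by blast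
qed

end
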